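(* Fix $0<\varepsilon<\frac1{10}$. Let $n$ be a positive integer, $m=\lceil n/\log^8 n\rceil$, and let $\pi_R,\pi_B:[n]\to[m]$ be independent uniformly random functions. Let $s=\lceil\varepsilon n\rceil$ and let $\mathcal E(\varepsilon)$ be the event that for every $s$-pairing $P$ in $[n]$, at least one of $\pi_R,\pi_B$ is $\varepsilon$-respectful of $P$. Then $\mathcal E(\varepsilon)$ holds with probability tending to $1$ as $n\to\infty$.
   Context: Logarithms are natural. An $s$-pairing in $[n]$ is a collection $\{(u_1,v_1),\dots,(u_s,v_s)\}$ of pairs where $u_1,\dots,u_s,v_1,\dots,v_s$ are distinct elements of $[n]$. A map $\pi:[n]\to[m]$ is $\varepsilon$-respectful of such a pairing if there is $I\subseteq[s]$ with $|I|\geq\varepsilon s$ such that $\pi(u_i)\neq\pi(v_i)$ for all $i\in I$ and the unordered pairs $\{\pi(u_i),\pi(v_i)\}$, $i\in I$, are pairwise distinct. *)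

theory Defs
  imports "HOL-Probability.Probability"
begin

definition is_pairing :: "nat \<Rightarrow> nat \<Rightarrow> (nat \<times> nat) list \<Rightarrow> bool" where
  "is_pairing n s ps \<longleftrightarrow> length ps = s \<and> distinct (map fst ps @ map snd ps)
     \<and> set (map fst ps @ map snd ps) \<subseteq> {1..n}"

definition respectful :: "real \<Rightarrow> (nat \<Rightarrow> nat) \<Rightarrow> (nat \<times> nat) list \<Rightarrow> bool" where
  "respectful eps f ps \<longleftrightarrow>
     (\<exists>I \<subseteq> {..<length ps}. real (card I) \<ge> eps * real (length ps)
        \<and> (\<forall>i\<in>I. f (fst (ps ! i)) \<noteq> f (snd (ps ! i)))
        \<and> inj_on (\<lambda>i. {f (fst (ps ! i)), f (snd (ps ! i))}) I)"

definition m_of :: "nat \<Rightarrow> nat" where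
  "m_of n = nat \<lceil>real n / (ln (real n)) ^ 8\<rceil>"

definition s_of :: "real \<Rightarrow> nat \<Rightarrow> nat" where
  "s_of eps n = nat \<lceil>eps * real n\<rceil>"

definition event_E :: "real \<Rightarrow> nat \<Rightarrow> (nat \<Rightarrow> nat) \<times> (nat \<Rightarrow> nat) \<Rightarrow> bool" where
  "event_E eps n pp \<longleftrightarrow> (\<forall>ps. is_pairing n (s_of eps n) ps \<longrightarrow>
       respectful eps (fst pp) ps \<or> respectful eps (snd pp) ps)"

definition two_maps :: "nat \<Rightarrow> ((nat \<Rightarrow> nat) \<times> (nat \<Rightarrow> nat)) pmf" where
  "two_maps n = pmf_of_set (({1..n} \<rightarrow>\<^sub>E {1..m_of n}) \<times> ({1..n} \<rightarrow>\<^sub>E {1..m_of n}))"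

end

theory Submission
  imports Defs "HOL-Real_Asymp.Real_Asymp"
begin

(* A union bound. If neither pi_R nor pi_B is eps-respectful of a pairing with pair set S, each
   of them has fewer than eps s distinct unordered image pairs on S, so it maps every pair of S
   into a pattern Z of at most k = m + 2 eps s ordered pairs (the diagonal and both orientations
   of the image pairs). There are at most (e n^2 / s)^s choices of S, at most (k + 1) m^(2k) of
   each pattern, and at most k^s m^(n - 2s) maps sending the pairs of S into a given pattern, so
   E(eps) fails with probability at most (k + 1)^2 m^(4k) (e n^2 k^2 / (s m^4))^s. As
   4k <= 4m + 8 eps s with 8 eps < 1 and m is about n / log^8 n, the logarithm of this bound is
   at most -(eps / 10) n log n + O(n / log^7 n), which is below -log n for large n. *)

lemma pow_div_fact_le_exp:
  fixes x :: real
  assumes "x \<ge> 0"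
  shows "x ^ s / fact s \<le> exp x"
proof -
  have "(\<Sum>n\<in>{s}. x ^ n / fact n) \<le> (\<Sum>n. x ^ n / fact n)"
    using summable_exp_generic[of x] assms
    by (intro sum_le_suminf) (auto simp: divide_inverse ac_simps)
  also have "\<dots> = exp x"
    by (simp add: exp_def divide_inverse ac_simps)
  finally show ?thesis
    by simp
qed

lemma binomial_le_exp_mult_div_pow:
  assumes "s > 0"
  shows "real (N choose s) \<le> (exp 1 * N / s) ^ s"
proof -
  have "real (N choose s) * fact s \<le> real N ^ s"
    using binomial_fact_pow[of N s] by (metis of_nat_fact of_nat_le_iff of_nat_mult of_nat_power)
  then have "real (N choose s) \<le> real N ^ s / fact s"
    by (simp add: field_simps)
  also have "\<dots> = (N / s) ^ s * (real s ^ s / fact s)"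
    using assms by (simp add: power_divide)
  also have "\<dots> \<le> (N / s) ^ s * exp (real s)"
    by (intro mult_left_mono pow_div_fact_le_exp) auto
  also have "\<dots> = (exp 1 * N / s) ^ s"
    by (simp add: power_divide power_mult_distrib flip: exp_of_nat_mult)
  finally show ?thesis .
qed

lemma card_subsets_card_le:
  assumes "finite U" "card U \<ge> 1"
  shows "card {Z. Z \<subseteq> U \<and> card Z \<le> k} \<le> (k + 1) * card U ^ k"
proof -
  have "{Z. Z \<subseteq> U \<and> card Z \<le> k} = (\<Union>j\<le>k. {Z. Z \<subseteq> U \<and> card Z = j})"
    by auto
  then have "card {Z. Z \<subseteq> U \<and> card Z \<le> k} \<le> (\<Sum>j\<le>k. card {Z. Z \<subseteq> U \<and> card Z = j})"
    by (simp add: card_UN_le)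
  also have "\<dots> \<le> (\<Sum>j\<le>k. card U ^ k)"
  proof (intro sum_mono)
    fix j assume "j \<in> {..k}"
    have "card {Z. Z \<subseteq> U \<and> card Z = j} = card U choose j"
      by (rule n_subsets[OF assms(1)])
    also have "\<dots> \<le> card U ^ j"
      by (cases "j \<le> card U") (auto simp: binomial_le_pow binomial_eq_0)
    also have "\<dots> \<le> card U ^ k"
      using assms(2) \<open>j \<in> {..k}\<close> by (intro power_increasing) auto
    finally show "card {Z. Z \<subseteq> U \<and> card Z = j} \<le> card U ^ k" .
  qed
  finally show ?thesis
    by simp
qed

lemma card_UN_le_card_mult:
  assumes "finite I" "\<And>i. i \<in> I \<Longrightarrow> card (A i) \<le> K"
  shows "card (\<Union>i\<in>I. A i) \<le> card I * K"
  using card_UN_le[OF assms(1), of A] sum_bounded_above[of I "\<lambda>i. card (A i)" K] assms(2)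
  by simp

definition endpoints :: "('a \<times> 'a) set \<Rightarrow> 'a set" where
  "endpoints S = fst ` S \<union> snd ` S"

definition pair_constrained_maps ::
    "'a set \<Rightarrow> 'b set \<Rightarrow> ('a \<times> 'a) set \<Rightarrow> ('b \<times> 'b) set \<Rightarrow> ('a \<Rightarrow> 'b) set" where
  "pair_constrained_maps D M S Z = {f \<in> D \<rightarrow>\<^sub>E M. \<forall>p\<in>S. (f (fst p), f (snd p)) \<in> Z}"

lemma card_pair_constrained_maps_le:
  assumes "finite D" "finite M" "finite S" "finite Z" "endpoints S \<subseteq> D"
  shows "card (pair_constrained_maps D M S Z) \<le> card Z ^ card S * card M ^ card (D - endpoints S)"
proof -
  define F where "F = pair_constrained_maps D M S Z"
  define h where "h f = (restrict (\<lambda>p. (f (fst p), f (snd p))) S, restrict f (D - endpoints S))"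
    for f :: "'a \<Rightarrow> 'b"
  have "h ` F \<subseteq> (S \<rightarrow>\<^sub>E Z) \<times> (D - endpoints S \<rightarrow>\<^sub>E M)"
    by (auto simp: h_def F_def pair_constrained_maps_def)
  moreover have "inj_on h F"
  proof (rule inj_onI)
    fix f g assume f: "f \<in> F" and g: "g \<in> F" and eq: "h f = h g"
    have "f x = g x" if "x \<in> D" for x
    proof (cases "x \<in> endpoints S")
      case True
      then obtain u v where "(u, v) \<in> S" "x = u \<or> x = v"
        by (auto simp: endpoints_def)
      with fun_cong[OF arg_cong[where f = fst, OF eq], of "(u, v)"] show ?thesis
        by (auto simp: h_def)
    next
      case False
      with that fun_cong[OF arg_cong[where f = snd, OF eq], of x] show ?thesis
        by (simp add: h_def)
    qed
    with f g show "f = g"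
      by (intro extensionalityI[where A = D]) (auto simp: F_def pair_constrained_maps_def PiE_iff)
  qed
  ultimately have "card F \<le> card ((S \<rightarrow>\<^sub>E Z) \<times> (D - endpoints S \<rightarrow>\<^sub>E M))"
    using assms by (intro card_inj_on_le) (auto intro!: finite_PiE)
  also have "\<dots> = card Z ^ card S * card M ^ card (D - endpoints S)"
    using assms by (simp add: card_cartesian_product card_PiE)
  finally show ?thesis
    unfolding F_def .
qed

definition pair_images :: "('a \<Rightarrow> 'b) \<Rightarrow> ('a \<times> 'a) set \<Rightarrow> 'b set set" where
  "pair_images f S = (\<lambda>p. {f (fst p), f (snd p)}) ` {p \<in> S. f (fst p) \<noteq> f (snd p)}"

lemma respectful_if_card_pair_images_ge:
  assumes "real (card (pair_images f (set ps))) \<ge> eps * real (length ps)"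
  shows "respectful eps f ps"
proof -
  define c where "c i = {f (fst (ps ! i)), f (snd (ps ! i))}" for i
  define G where "G = {i. i < length ps \<and> f (fst (ps ! i)) \<noteq> f (snd (ps ! i))}"
  have "{p \<in> set ps. f (fst p) \<noteq> f (snd p)} = (!) ps ` G"
    by (force simp: G_def in_set_conv_nth)
  then have "pair_images f (set ps) = c ` G"
    by (simp add: pair_images_def c_def image_image)
  moreover obtain I where I: "I \<subseteq> G" "inj_on c I" "c ` G = c ` I"
    using subset_image_inj[of "c ` G" c G] by auto
  ultimately have "card (pair_images f (set ps)) = card I"
    by (simp add: card_image)
  moreover have "I \<subseteq> {..<length ps}" "\<forall>i\<in>I. f (fst (ps ! i)) \<noteq> f (snd (ps ! i))"
    using I(1) by (auto simp: G_def)
  ultimately show ?thesis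
    using assms I(2) unfolding respectful_def c_def[symmetric] by auto
qed

definition pair_pattern :: "'b set \<Rightarrow> 'b set set \<Rightarrow> ('b \<times> 'b) set" where
  "pair_pattern M C = {(a, b) \<in> M \<times> M. a = b \<or> {a, b} \<in> C}"

lemma ordered_pairs_of_doubleton: "{(a, b). {a, b} = {x, y}} = {(x, y), (y, x)}"
  by (auto simp: doubleton_eq_iff)

lemma card_pair_pattern_le:
  fixes M :: "'a set"
  assumes "finite M" "finite C" "\<forall>c\<in>C. \<exists>x y. c = {x, y}"
  shows "card (pair_pattern M C) \<le> card M + 2 * card C"
proof -
  define orient where "orient c = {(a, b). {a, b} = c}" for c :: "'a set"
  have orient: "finite (orient c)" "card (orient c) \<le> 2" if c: "c \<in> C" for c
  proof -
    obtain x y where "c = {x, y}"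
      using assms(3) c by blast
    then show "finite (orient c)" "card (orient c) \<le> 2"
      by (simp_all add: orient_def ordered_pairs_of_doubleton card_insert_le_m1)
  qed
  have "pair_pattern M C \<subseteq> (\<lambda>a. (a, a)) ` M \<union> (\<Union>c\<in>C. orient c)"
    by (auto simp: pair_pattern_def orient_def)
  then have "card (pair_pattern M C) \<le> card ((\<lambda>a. (a, a)) ` M \<union> (\<Union>c\<in>C. orient c))"
    using assms(1,2) orient(1) by (intro card_mono) auto
  also have "\<dots> \<le> card ((\<lambda>a. (a, a)) ` M) + card (\<Union>c\<in>C. orient c)"
    by (rule card_Un_le)
  also have "\<dots> \<le> card M + (\<Sum>c\<in>C. card (orient c))"
    using assms by (intro add_mono card_image_le card_UN_le)
  also have "\<dots> \<le> card M + 2 * card C"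
    using orient(2) sum_bounded_above[of C "\<lambda>c. card (orient c)" 2] by simp
  finally show ?thesis .
qed

lemma map_in_pair_constrained_maps_of_images:
  assumes "f \<in> D \<rightarrow>\<^sub>E M" "endpoints S \<subseteq> D"
  shows "f \<in> pair_constrained_maps D M S (pair_pattern M (pair_images f S))"
proof -
  have "(f (fst p), f (snd p)) \<in> pair_pattern M (pair_images f S)" if p: "p \<in> S" for p
  proof -
    have "fst p \<in> D" "snd p \<in> D"
      using p assms(2) by (auto simp: endpoints_def)
    then have "f (fst p) \<in> M" "f (snd p) \<in> M"
      using assms(1) by auto
    with p show ?thesis
      by (auto simp: pair_pattern_def pair_images_def)
  qed
  with assms(1) show ?thesis
    by (simp add: pair_constrained_maps_def)
qed

definition pairing_sets :: "nat \<Rightarrow> nat \<Rightarrow> (nat \<times> nat) set set" where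
  "pairing_sets n s = {S. S \<subseteq> {1..n} \<times> {1..n} \<and> card S = s \<and> card (endpoints S) = 2 * s}"

definition small_patterns :: "nat \<Rightarrow> nat \<Rightarrow> (nat \<times> nat) set set" where
  "small_patterns m k = {Z. Z \<subseteq> {1..m} \<times> {1..m} \<and> card Z \<le> k}"

lemma finite_pairing_sets: "finite (pairing_sets n s)"
  by (auto simp: pairing_sets_def intro: finite_subset[of _ "Pow ({1..n} \<times> {1..n})"])

lemma finite_small_patterns: "finite (small_patterns m k)"
  by (auto simp: small_patterns_def intro: finite_subset[of _ "Pow ({1..m} \<times> {1..m})"])

lemma set_pairing_in_pairing_sets:
  assumes "is_pairing n s ps"
  shows "set ps \<in> pairing_sets n s"
proof -
  have dist: "distinct (map fst ps @ map snd ps)" and len: "length ps = s"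
    and sub: "set (map fst ps @ map snd ps) \<subseteq> {1..n}"
    using assms by (auto simp: is_pairing_def)
  have "distinct ps"
    using dist by (simp add: distinct_map)
  then have "card (set ps) = s"
    using len by (simp add: distinct_card)
  moreover have "card (endpoints (set ps)) = 2 * s"
  proof -
    have "card (endpoints (set ps)) = card (set (map fst ps @ map snd ps))"
      by (simp add: endpoints_def)
    also have "\<dots> = 2 * s"
      using distinct_card[OF dist] len by simp
    finally show ?thesis .
  qed
  moreover have "set ps \<subseteq> {1..n} \<times> {1..n}"
    using sub by force
  ultimately show ?thesis
    by (simp add: pairing_sets_def)
qed

lemma card_pairing_sets_le:
  assumes "s > 0"
  shows "real (card (pairing_sets n s)) \<le> (exp 1 * real n ^ 2 / real s) ^ s"
proof -
  have "card (pairing_sets n s) \<le> card {S. S \<subseteq> {1..n} \<times> {1..n} \<and> card S = s}"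
    by (intro card_mono) (auto simp: pairing_sets_def)
  also have "\<dots> = n^2 choose s"
    by (simp add: n_subsets card_cartesian_product power2_eq_square)
  finally show ?thesis
    using binomial_le_exp_mult_div_pow[of s "n^2"] assms by simp
qed

lemma card_small_patterns_le:
  assumes "m \<ge> 1"
  shows "real (card (small_patterns m k)) \<le> (real k + 1) * (real m ^ 2) ^ k"
proof -
  have "card (small_patterns m k) \<le> (k + 1) * card ({1..m} \<times> {1..m}) ^ k"
    unfolding small_patterns_def using assms by (intro card_subsets_card_le) auto
  then have "card (small_patterns m k) \<le> (k + 1) * (m^2) ^ k"
    by (simp add: card_cartesian_product power2_eq_square)
  then have "real (card (small_patterns m k)) \<le> real ((k + 1) * (m^2) ^ k)"
    by (simp only: of_nat_le_iff)
  then show ?thesis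
    by (simp add: algebra_simps)
qed

lemma card_pair_constrained_maps_pairing_le:
  assumes "S \<in> pairing_sets n s" "Z \<in> small_patterns m k"
  shows "card (pair_constrained_maps {1..n} {1..m} S Z) \<le> k ^ s * m ^ (n - 2 * s)"
proof -
  have S: "endpoints S \<subseteq> {1..n}" "finite S" "card S = s" "card (endpoints S) = 2 * s"
    using assms(1) by (auto simp: pairing_sets_def endpoints_def intro: finite_subset)
  have Z: "finite Z" "card Z \<le> k"
    using assms(2) by (auto simp: small_patterns_def intro: finite_subset)
  have "card ({1..n} - endpoints S) = n - 2 * s"
    using S by (simp add: card_Diff_subset finite_subset)
  moreover have "card (pair_constrained_maps {1..n} {1..m} S Z)
      \<le> card Z ^ card S * card {1..m} ^ card ({1..n} - endpoints S)"
    using S Z by (intro card_pair_constrained_maps_le) auto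
  ultimately show ?thesis
    using S(3) Z(2) by (simp add: le_trans power_mono)
qed

lemma not_event_E_subset:
  fixes eps :: real and n m :: nat
  defines "s \<equiv> s_of eps n" and "k \<equiv> m + 2 * nat \<lfloor>eps * s_of eps n\<rfloor>"
  shows "({1..n} \<rightarrow>\<^sub>E {1..m}) \<times> ({1..n} \<rightarrow>\<^sub>E {1..m}) - {pp. event_E eps n pp} \<subseteq>
    (\<Union>(S, ZR, ZB) \<in> pairing_sets n s \<times> small_patterns m k \<times> small_patterns m k.
      pair_constrained_maps {1..n} {1..m} S ZR \<times> pair_constrained_maps {1..n} {1..m} S ZB)"
proof
  fix pp assume "pp \<in> ({1..n} \<rightarrow>\<^sub>E {1..m}) \<times> ({1..n} \<rightarrow>\<^sub>E {1..m}) - {pp. event_E eps n pp}"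
  then obtain R B ps where RB: "pp = (R, B)" "R \<in> {1..n} \<rightarrow>\<^sub>E {1..m}" "B \<in> {1..n} \<rightarrow>\<^sub>E {1..m}"
    and ps: "is_pairing n s ps" "\<not> respectful eps R ps" "\<not> respectful eps B ps"
    by (auto simp: event_E_def s_def)
  define S where "S = set ps"
  have S: "S \<in> pairing_sets n s"
    unfolding S_def using ps(1) by (rule set_pairing_in_pairing_sets)
  then have ends: "endpoints S \<subseteq> {1..n}"
    by (auto simp: pairing_sets_def endpoints_def)
  have pattern: "pair_pattern {1..m} (pair_images f S) \<in> small_patterns m k"
    if "\<not> respectful eps f ps" for f
  proof -
    have "real (card (pair_images f S)) < eps * s"
      using that respectful_if_card_pair_images_ge[of eps ps f] ps(1)
      by (auto simp: S_def is_pairing_def)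
    then have "card (pair_images f S) \<le> nat \<lfloor>eps * s\<rfloor>"
      by linarith
    moreover have "card (pair_pattern {1..m} (pair_images f S)) \<le> m + 2 * card (pair_images f S)"
      using card_pair_pattern_le[of "{1..m}" "pair_images f S"] by (auto simp: S_def pair_images_def)
    ultimately show ?thesis
      by (auto simp: small_patterns_def k_def s_def pair_pattern_def)
  qed
  show "pp \<in> (\<Union>(S, ZR, ZB) \<in> pairing_sets n s \<times> small_patterns m k \<times> small_patterns m k.
      pair_constrained_maps {1..n} {1..m} S ZR \<times> pair_constrained_maps {1..n} {1..m} S ZB)"
    using S pattern[OF ps(2)] pattern[OF ps(3)] RB
      map_in_pair_constrained_maps_of_images[OF RB(2) ends]
      map_in_pair_constrained_maps_of_images[OF RB(3) ends]
    by blast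
qed

lemma card_not_event_E_le:
  fixes eps :: real and n m :: nat
  defines "s \<equiv> s_of eps n" and "k \<equiv> m + 2 * nat \<lfloor>eps * s_of eps n\<rfloor>"
  assumes m: "m \<ge> 1" and s: "s \<ge> 1"
  shows "real (card (({1..n} \<rightarrow>\<^sub>E {1..m}) \<times> ({1..n} \<rightarrow>\<^sub>E {1..m}) - {pp. event_E eps n pp}))
    \<le> (exp 1 * real n ^ 2 / real s) ^ s * ((real k + 1) * (real m ^ 2) ^ k)^2
      * (real k ^ s * real m ^ (n - 2 * s))^2"
proof -
  let ?\<Omega> = "({1..n} \<rightarrow>\<^sub>E {1..m}) \<times> ({1..n} \<rightarrow>\<^sub>E {1..m})"
  let ?index = "pairing_sets n s \<times> small_patterns m k \<times> small_patterns m k"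
  let ?cover = "\<Union>(S, ZR, ZB) \<in> ?index.
      pair_constrained_maps {1..n} {1..m} S ZR \<times> pair_constrained_maps {1..n} {1..m} S ZB"
  define K where "K = k ^ s * m ^ (n - 2 * s)"
  have "?cover \<subseteq> ?\<Omega>"
    by (auto simp: pair_constrained_maps_def)
  then have "finite ?cover"
    by (rule finite_subset) (simp add: finite_PiE)
  moreover have "?\<Omega> - {pp. event_E eps n pp} \<subseteq> ?cover"
    unfolding s_def k_def by (rule not_event_E_subset)
  ultimately have "card (?\<Omega> - {pp. event_E eps n pp}) \<le> card ?cover"
    by (rule card_mono)
  also have "\<dots> \<le> card ?index * (K * K)"
    using card_pair_constrained_maps_pairing_le unfolding K_def
    by (intro card_UN_le_card_mult) (auto simp: finite_pairing_sets finite_small_patterns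
        card_cartesian_product intro!: mult_le_mono)
  finally have "real (card (?\<Omega> - {pp. event_E eps n pp}))
      \<le> real (card (pairing_sets n s)) * real (card (small_patterns m k))^2 * real K^2"
    by (simp add: card_cartesian_product power2_eq_square flip: of_nat_mult)
  also have "\<dots> \<le> (exp 1 * real n ^ 2 / real s) ^ s * ((real k + 1) * (real m ^ 2) ^ k)^2 * real K^2"
    using card_pairing_sets_le[of s n] card_small_patterns_le[of m k] m s
    by (intro mult_right_mono mult_mono power_mono) auto
  finally show ?thesis
    by (simp add: K_def)
qed

lemma union_bound_rearrange:
  fixes A E N k m s :: real
  assumes "A > 0" "m > 0" "s > 0"
  shows "(E * N / s) ^ ns * ((k + 1) * (m^2) ^ nk)^2 * (k ^ ns * A)^2 / ((A * (m^2) ^ ns) * (A * (m^2) ^ ns))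
    = (k + 1)^2 * m ^ (4 * nk) * (E * N * k^2 / (s * m^4)) ^ ns"
proof -
  have atoms: "X * ((k + 1) * P^2)^2 * (K * A)^2 / ((A * B^2) * (A * B^2)) = (k + 1)^2 * P^4 * (X * K^2 / B^4)"
    if "B > 0" for X P K B :: real
    using that \<open>A > 0\<close> by (simp add: field_simps power2_eq_square power4_eq_xxxx)
  have "(m^2) ^ nk = (m ^ nk)^2" "m ^ (4 * nk) = (m ^ nk)^4" "(m^2) ^ ns = (m ^ ns)^2"
    by (simp_all flip: power_mult add: mult.commute)
  moreover have "(E * N * k^2 / (s * m^4)) ^ ns = (E * N / s) ^ ns * (k ^ ns)^2 / (m ^ ns)^4"
    by (simp add: power_mult_distrib power_divide flip: power_mult) (simp add: mult.commute)
  ultimately show ?thesis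
    using atoms[of "m ^ ns"] assms by simp
qed

lemma prob_event_E_ge:
  fixes eps :: real and n :: nat
  defines "m \<equiv> m_of n" and "s \<equiv> s_of eps n" and "k \<equiv> m_of n + 2 * nat \<lfloor>eps * s_of eps n\<rfloor>"
  assumes m: "m \<ge> 1" and s: "s \<ge> 1" and two_s: "2 * s \<le> n"
  shows "1 - (real k + 1)^2 * real m ^ (4 * k) * (exp 1 * real n ^ 2 * real k ^ 2 / (real s * real m ^ 4)) ^ s
    \<le> measure_pmf.prob (two_maps n) {pp. event_E eps n pp}"
proof -
  define \<Omega> where "\<Omega> = ({1..n} \<rightarrow>\<^sub>E {1..m}) \<times> ({1..n} \<rightarrow>\<^sub>E {1..m})"
  define E where "E = {pp. event_E eps n pp}"
  have fin: "finite \<Omega>"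
    by (simp add: \<Omega>_def finite_PiE)
  have "card \<Omega> = m ^ n * m ^ n"
    by (simp add: \<Omega>_def card_cartesian_product card_PiE)
  moreover have "real m ^ n = real m ^ (n - 2 * s) * (real m ^ 2) ^ s"
    using two_s by (metis le_add_diff_inverse2 power_add power_mult)
  ultimately have card_\<Omega>:
    "real (card \<Omega>) = (real m ^ (n - 2 * s) * (real m ^ 2) ^ s) * (real m ^ (n - 2 * s) * (real m ^ 2) ^ s)"
    by (metis of_nat_mult of_nat_power)
  then have pos: "real (card \<Omega>) > 0"
    using m by simp
  have "measure_pmf.prob (two_maps n) E = real (card (\<Omega> \<inter> E)) / real (card \<Omega>)"
    using fin pos by (simp add: two_maps_def measure_pmf_of_set \<Omega>_def m_def card_gt_0_iff)
  also have "\<dots> = 1 - real (card (\<Omega> - E)) / real (card \<Omega>)"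
    using fin pos card_Int_Diff[OF fin, of E] by (simp add: field_simps)
  finally have prob: "measure_pmf.prob (two_maps n) E = 1 - real (card (\<Omega> - E)) / real (card \<Omega>)" .
  have "real (card (\<Omega> - E)) / real (card \<Omega>)
      \<le> (exp 1 * real n ^ 2 / real s) ^ s * ((real k + 1) * (real m ^ 2) ^ k)^2
        * (real k ^ s * real m ^ (n - 2 * s))^2 / real (card \<Omega>)"
    using card_not_event_E_le[of m eps n] m s pos
    by (intro divide_right_mono) (simp_all add: \<Omega>_def E_def m_def s_def k_def)
  also have "\<dots> = (real k + 1)^2 * real m ^ (4 * k) * (exp 1 * real n ^ 2 * real k ^ 2 / (real s * real m ^ 4)) ^ s"
    unfolding card_\<Omega> using m s by (intro union_bound_rearrange) auto
  finally show ?thesis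
    using prob by (simp add: E_def)
qed

lemma ln_union_bound_le:
  fixes eps x :: real and m s k :: nat
  assumes eps: "eps \<le> 1/10"
    and "1 \<le> k" "k \<le> s" "s \<le> x" "1 \<le> m" "m \<le> x"
    and k: "k \<le> m + 2 * eps * s"
  shows "ln ((real k + 1)^2 * real m ^ (4 * k) * (exp 1 * x^2 * real k ^ 2 / (real s * real m ^ 4)) ^ s)
    \<le> 2 * ln (real k + 1) + 4 * m * ln x + s * (1 + 3 * ln x - 3.2 * ln m)"
proof -
  define Q where "Q = exp 1 * x^2 * real k ^ 2 / (real s * real m ^ 4)"
  have pos: "0 < x" "0 < real k" "0 < real s" "0 < real m" "0 < Q"
    using assms by (auto simp: Q_def)
  have ln_m: "0 \<le> ln m" "ln m \<le> ln x"
    using assms pos by simp_all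
  have "ln Q = 1 + 2 * ln x + 2 * ln k - ln s - 4 * ln m"
    using pos by (simp add: Q_def ln_div ln_mult ln_realpow)
  moreover have "ln k \<le> ln s" "ln s \<le> ln x"
    using assms pos by simp_all
  ultimately have "s * ln Q \<le> s * (1 + 3 * ln x - 4 * ln m)"
    by (intro mult_left_mono) auto
  moreover have "real (4 * k) * ln m \<le> 4 * m * ln x + 0.8 * (s * ln m)"
  proof -
    have "real (4 * k) * ln m \<le> (4 * m + 8 * eps * s) * ln m"
      using k ln_m(1) by (intro mult_right_mono) auto
    also have "\<dots> = 4 * m * ln m + 8 * eps * (s * ln m)"
      by (simp add: algebra_simps)
    also have "\<dots> \<le> 4 * m * ln x + 0.8 * (s * ln m)"
      using ln_m eps by (intro add_mono mult_left_mono mult_right_mono) auto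
    finally show ?thesis .
  qed
  moreover have "ln ((real k + 1)^2 * real m ^ (4 * k) * Q ^ s)
      = 2 * ln (real k + 1) + real (4 * k) * ln m + s * ln Q"
    using pos by (simp add: ln_mult ln_realpow)
  ultimately show ?thesis
    unfolding Q_def[symmetric] by (simp add: algebra_simps)
qed

lemma union_bound_le_inverse:
  fixes eps x :: real and m s k :: nat
  defines "L \<equiv> ln x"
  assumes eps: "0 < eps" "eps < 1/10"
    and m: "x / L^8 \<le> m" "1 \<le> m"
    and s: "eps * x \<le> s" "s \<le> x"
    and k: "1 \<le> k" "k \<le> m + 2 * eps * s"
    and ln_ln: "1 + 25.6 * ln L \<le> L / 10"
    and large: "5 + 4 * real m \<le> eps * x / 10"
  shows "(real k + 1)^2 * real m ^ (4 * k) * (exp 1 * x^2 * real k ^ 2 / (real s * real m ^ 4)) ^ s \<le> 1 / x"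
proof -
  have "0 < eps * x"
    using large by simp
  then have "0 < x"
    using eps by (simp add: zero_less_mult_iff)
  moreover have "eps * x \<le> x / 10" "eps * s \<le> s / 10"
    using mult_right_mono[of eps "1/10"] eps \<open>0 < x\<close> by simp_all
  ultimately have x: "500 \<le> x" "real m \<le> x" and "1 \<le> real s" and k_le_s: "real k \<le> real s"
    using large s k(2) by linarith+
  have L: "0 < L"
    using x by (simp add: L_def)
  have ln_k1: "ln (real k + 1) \<le> 2 * L"
  proof -
    have "real k + 1 \<le> x^2"
      unfolding power2_eq_square using k_le_s s(2) x mult_right_mono[of 2 x x] by linarith
    then have "ln (real k + 1) \<le> ln (x^2)"
      by (subst ln_le_cancel_iff) auto
    then show ?thesis
      using x by (simp add: L_def ln_realpow)
  qed
  have "ln (x / L^8) \<le> ln m"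
    using m x L by (subst ln_le_cancel_iff) auto
  then have "1 + 3 * L - 3.2 * ln m \<le> - L / 10"
    using x L ln_ln by (simp add: L_def ln_div ln_realpow)
  then have "s * (1 + 3 * L - 3.2 * ln m) \<le> s * (- L / 10)"
    by (intro mult_left_mono) auto
  also have "\<dots> \<le> eps * x * (- L / 10)"
    using s(1) L by (intro mult_right_mono_neg) auto
  finally have "ln ((real k + 1)^2 * real m ^ (4 * k) * (exp 1 * x^2 * real k ^ 2 / (real s * real m ^ 4)) ^ s)
      \<le> L * (4 + 4 * m - eps * x / 10)"
    using ln_union_bound_le[of eps k s x m] eps k k_le_s s(2) x m(2) ln_k1
    unfolding L_def by (simp add: algebra_simps)
  also have "\<dots> \<le> L * (- 1)"
    using large L by (intro mult_left_mono) auto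
  also have "\<dots> = ln (1 / x)"
    using x by (simp add: L_def ln_div)
  finally show ?thesis
    using m(2) k(1) \<open>1 \<le> real s\<close> x by (simp add: ln_le_cancel_iff)
qed

lemma eventually_large_n:
  fixes eps :: real
  assumes "0 < eps"
  shows "\<forall>\<^sub>F n in sequentially. 1 \<le> real n / ln (real n) ^ 8
    \<and> 1 + 25.6 * ln (ln (real n)) \<le> ln (real n) / 10
    \<and> 5 + 8 * real n / ln (real n) ^ 8 \<le> eps * real n / 10"
  using assms by (intro eventually_conj; real_asymp)

lemma prob_event_E_ge_large_n:
  fixes eps :: real and n :: nat
  assumes eps: "0 < eps" "eps < 1/10"
    and n: "1 \<le> real n / ln (real n) ^ 8" "1 + 25.6 * ln (ln (real n)) \<le> ln (real n) / 10"
      "5 + 8 * real n / ln (real n) ^ 8 \<le> eps * real n / 10"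
  shows "1 - 1 / real n \<le> measure_pmf.prob (two_maps n) {pp. event_E eps n pp}"
proof -
  define x where "x = real n"
  define m where "m = m_of n"
  define s where "s = s_of eps n"
  define k where "k = m + 2 * nat \<lfloor>eps * s\<rfloor>"
  have m: "x / ln x ^ 8 \<le> m" "real m \<le> 2 * x / ln x ^ 8" "1 \<le> m"
    using n(1) by (simp_all add: m_def m_of_def x_def) linarith+
  have eps_x: "eps * x \<le> x / 10"
    using mult_right_mono[of eps "1/10" x] eps by (simp add: x_def)
  have "0 \<le> 8 * x / ln x ^ 8"
    by (simp add: x_def)
  with n(3) eps_x have x: "x \<ge> 500" "eps * x \<ge> 50"
    unfolding x_def by linarith+
  have "real s = of_int \<lceil>eps * x\<rceil>"
    using eps by (simp add: s_def s_of_def x_def)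
  with ceiling_correct[of "eps * x"] x eps_x
  have s: "eps * x \<le> s" "s \<le> x" "2 * real s \<le> x" "1 \<le> real s"
    by linarith+
  then have "real (2 * s) \<le> real n" "real 1 \<le> real s"
    by (simp_all add: x_def)
  then have s_nat: "2 * s \<le> n" "1 \<le> s"
    by (simp_all only: of_nat_le_iff)
  have k: "1 \<le> k" "k \<le> m + 2 * eps * s"
    using m(3) eps by (simp_all add: k_def)
  have "(real k + 1)^2 * real m ^ (4 * k) * (exp 1 * x^2 * real k ^ 2 / (real s * real m ^ 4)) ^ s \<le> 1 / x"
    using eps m s k x n(2,3) by (intro union_bound_le_inverse) (auto simp: x_def)
  moreover have "1 - (real k + 1)^2 * real m ^ (4 * k) * (exp 1 * x^2 * real k ^ 2 / (real s * real m ^ 4)) ^ s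
      \<le> measure_pmf.prob (two_maps n) {pp. event_E eps n pp}"
    using m(3) s_nat unfolding x_def m_def s_def k_def by (intro prob_event_E_ge) auto
  ultimately show ?thesis
    by (simp add: x_def)
qed

theorem lemma4p2:
  fixes eps :: real
  assumes "0 < eps" and "eps < 1/10"
  shows "(\<lambda>n. measure_pmf.prob (two_maps n) {pp. event_E eps n pp}) \<longlonglongrightarrow> 1"
proof (rule tendsto_sandwich)
  show "\<forall>\<^sub>F n in sequentially. 1 - 1 / real n \<le> measure_pmf.prob (two_maps n) {pp. event_E eps n pp}"
    using eventually_large_n[OF assms(1)]
    by eventually_elim (use assms prob_event_E_ge_large_n in blast)
  show "\<forall>\<^sub>F n in sequentially. measure_pmf.prob (two_maps n) {pp. event_E eps n pp} \<le> 1"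
    by (simp add: measure_pmf.prob_le_1)
  show "(\<lambda>n. 1 - 1 / real n) \<longlonglongrightarrow> 1"
    by real_asymp
qed (rule tendsto_const)

end
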